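(* Let $s\ge 0$, $t\ge 1$, and let $G=K_s\vee K_{2*t}$. Let $A$ be a clique of size $s+t$ in $G$ and let $B=V(G)\setminus A$. If $f:V(G)\to\mathbb{Z}^+$ satisfies $f(v)\ge s+t$ for all $v\in A$ and $f(v)\ge t$ for all $v\in B$, then $G$ is $f$-AT.
   Context: $K_{2*t}$ is the complete multipartite graph with $t$ parts of size $2$; $G_1\vee G_2$ (the join) is the disjoint union of $G_1$ and $G_2$ together with all edges between them. For a graph $G$ and $f:V(G)\to\mathbb{Z}^+$, an orientation $D$ of $E(G)$ is an Alon--Tarsi orientation for $f$ if $d^+_D(v)<f(v)$ for every vertex $v$ and the number of spanning Eulerian subgraphs of $D$ (spanning subdigraphs in which every vertex has equal in- and out-degree) with an even number of edges differs from the number with an odd number of edges; $G$ is $f$-AT if such an orientation exists. *)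

theory Defs
  imports Main
begin

text \<open>Simple graphs: a vertex set V and an edge set E of 2-element subsets of V.
  Digraphs (orientations, subdigraphs) are sets of arcs (u,v).\<close>

definition out_deg :: "('a \<times> 'a) set \<Rightarrow> 'a \<Rightarrow> nat" where
  "out_deg D v = card {w. (v, w) \<in> D}"

definition in_deg :: "('a \<times> 'a) set \<Rightarrow> 'a \<Rightarrow> nat" where
  "in_deg D v = card {w. (w, v) \<in> D}"

definition is_orientation :: "'a set \<Rightarrow> 'a set set \<Rightarrow> ('a \<times> 'a) set \<Rightarrow> bool" where
  "is_orientation V E D \<longleftrightarrow>
     (\<forall>(u, v) \<in> D. u \<noteq> v \<and> {u, v} \<in> E) \<and>
     (\<forall>u v. u \<noteq> v \<and> {u, v} \<in> E \<longrightarrow> ((u, v) \<in> D \<longleftrightarrow> (v, u) \<notin> D))"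

definition eulerian_sub :: "'a set \<Rightarrow> ('a \<times> 'a) set \<Rightarrow> ('a \<times> 'a) set \<Rightarrow> bool" where
  "eulerian_sub V D H \<longleftrightarrow> H \<subseteq> D \<and> (\<forall>v\<in>V. in_deg H v = out_deg H v)"

definition EE :: "'a set \<Rightarrow> ('a \<times> 'a) set \<Rightarrow> nat" where
  "EE V D = card {H. eulerian_sub V D H \<and> even (card H)}"

definition EO :: "'a set \<Rightarrow> ('a \<times> 'a) set \<Rightarrow> nat" where
  "EO V D = card {H. eulerian_sub V D H \<and> odd (card H)}"

definition AT_orientation :: "'a set \<Rightarrow> 'a set set \<Rightarrow> ('a \<Rightarrow> nat) \<Rightarrow> ('a \<times> 'a) set \<Rightarrow> bool" where
  "AT_orientation V E f D \<longleftrightarrow>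
     is_orientation V E D \<and> (\<forall>v\<in>V. out_deg D v < f v) \<and> EE V D \<noteq> EO V D"

definition f_AT :: "'a set \<Rightarrow> 'a set set \<Rightarrow> ('a \<Rightarrow> nat) \<Rightarrow> bool" where
  "f_AT V E f \<longleftrightarrow> (\<exists>D. AT_orientation V E f D)"

definition is_clique :: "'a set set \<Rightarrow> 'a set \<Rightarrow> bool" where
  "is_clique E A \<longleftrightarrow> (\<forall>u\<in>A. \<forall>v\<in>A. u \<noteq> v \<longrightarrow> {u, v} \<in> E)"

text \<open>The graph K_s \<or> K_{2*t}: vertices Inl i (i < s) form K_s, vertices
  Inr (j,k) (j < t, k < 2) form K_{2*t} whose parts are {Inr (j,0), Inr (j,1)}.\<close>
definition join_verts :: "nat \<Rightarrow> nat \<Rightarrow> (nat + nat \<times> nat) set" where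
  "join_verts s t = Inl ` {..<s} \<union> Inr ` ({..<t} \<times> {..<2})"

definition join_edges :: "nat \<Rightarrow> nat \<Rightarrow> (nat + nat \<times> nat) set set" where
  "join_edges s t = {{u, v} | u v. u \<in> join_verts s t \<and> v \<in> join_verts s t \<and> u \<noteq> v \<and>
      \<not> (\<exists>j. {u, v} = {Inr (j, 0), Inr (j, 1)})}"

end

theory Submission
  imports Defs "HOL-Library.FuncSet" Complex_Main
begin

text \<open>
  By the Alon--Tarsi theorem in its Combinatorial Nullstellensatz form, \<open>G\<close> is \<open>f\<close>-AT as
  soon as there are lists \<open>S v\<close> with \<open>card (S v) \<le> f v\<close> and \<open>\<Sum>v. card (S v) - 1 = |E|\<close>
  such that \<open>\<Sum>c \<in> \<Prod>v. S v. \<Prod>(u,v)\<in>R. (c u - c v) / \<Prod>v. \<Prod>y\<in>S v - {c v}. (c v - y)\<close> is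
  nonzero: that sum is the coefficient of \<open>\<Prod>v. x_v ^ (card (S v) - 1)\<close> in the graph
  polynomial, which in turn is \<open>\<plusminus>(EE - EO)\<close> for some orientation with out-degrees
  \<open>card (S v) - 1\<close>.

  For \<open>K_s \<or> K_{2*t}\<close> take colors \<open>{..<s+t}\<close> for the vertices of \<open>A\<close> in \<open>K_{2*t}\<close>,
  \<open>{..<t}\<close> for the other vertices of \<open>K_{2*t}\<close>, and \<open>{..<t} \<union> {t+i..<s+t}\<close> for the
  \<open>i\<close>-th vertex of \<open>K_s\<close>. In a proper coloring the vertices outside \<open>A\<close> use up all colors
  below \<open>t\<close>, which forces the \<open>i\<close>-th vertex of \<open>K_s\<close> to get \<open>t + i\<close> and each part of
  \<open>K_{2*t}\<close> to be monochromatic. All these colorings contribute the same nonzero term,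
  so the sum does not vanish.
\<close>

section \<open>Lagrange moments\<close>

definition node_weight :: "'a::field set \<Rightarrow> 'a \<Rightarrow> 'a" where
  "node_weight S x = (\<Prod>y\<in>S - {x}. x - y)"

definition lagrange_moment :: "'a::field set \<Rightarrow> nat \<Rightarrow> 'a" where
  "lagrange_moment S k = (\<Sum>x\<in>S. x ^ k / node_weight S x)"

lemma node_weight_nonzero: "node_weight S x \<noteq> 0"
  unfolding node_weight_def by (cases "finite S") auto

lemma lagrange_moment_Suc:
  assumes "finite S" "b \<in> S"
  shows "lagrange_moment S (Suc k) = b * lagrange_moment S k + lagrange_moment (S - {b}) k"
proof -
  have "lagrange_moment S (Suc k) = (\<Sum>x\<in>S. b * (x ^ k / node_weight S x) + x ^ k * (x - b) / node_weight S x)"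
    unfolding lagrange_moment_def by (intro sum.cong refl) (simp add: diff_divide_distrib algebra_simps)
  also have "\<dots> = b * lagrange_moment S k + (\<Sum>x\<in>S. x ^ k * (x - b) / node_weight S x)"
    unfolding lagrange_moment_def by (simp add: sum.distrib sum_distrib_left)
  also have "(\<Sum>x\<in>S. x ^ k * (x - b) / node_weight S x) = (\<Sum>x\<in>S - {b}. x ^ k * (x - b) / node_weight S x)"
    using assms by (subst sum.remove[of _ b]) auto
  also have "(\<Sum>x\<in>S - {b}. x ^ k * (x - b) / node_weight S x) = lagrange_moment (S - {b}) k"
    unfolding lagrange_moment_def
  proof (intro sum.cong refl)
    fix x assume x: "x \<in> S - {b}"
    have "S - {x} = insert b (S - {b} - {x})" using x assms by auto
    hence "node_weight S x = (x - b) * node_weight (S - {b}) x"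
      unfolding node_weight_def using assms x by simp
    with x assms node_weight_nonzero[of "S - {b}" x]
    show "x ^ k * (x - b) / node_weight S x = x ^ k / node_weight (S - {b}) x" by simp
  qed
  finally show ?thesis .
qed

text \<open>\<open>lagrange_moment S k\<close> is the leading coefficient of the Lagrange interpolant of
  \<open>x ^ k\<close> on \<open>S\<close>; this is the coefficient formula of the Combinatorial Nullstellensatz.\<close>
lemma lagrange_moment_eq:
  fixes S :: "'a::field set"
  assumes "finite S" "card S = Suc n" "k \<le> n"
  shows "lagrange_moment S k = (if k = n then 1 else 0)"
  using assms
proof (induction n arbitrary: S k)
  case 0
  then obtain a where "S = {a}" by (auto simp: card_Suc_eq)
  with 0 show ?case by (simp add: lagrange_moment_def node_weight_def)
next
  case (Suc n)
  note IH = Suc.IH and prems = Suc.prems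
  obtain a b where ab: "a \<in> S" "b \<in> S" "a \<noteq> b"
    using prems(2) by (auto simp: card_Suc_eq)
  have card_minus: "card (S - {x}) = Suc n" if "x \<in> S" for x
    using prems that by simp
  have moment_0: "lagrange_moment S 0 = 0"
  proof -
    have "lagrange_moment (S - {a}) 0 = lagrange_moment (S - {b}) 0"
      using IH[of "S - {a}" 0] IH[of "S - {b}" 0] prems card_minus ab by simp
    moreover have "a * lagrange_moment S 0 + lagrange_moment (S - {a}) 0
        = b * lagrange_moment S 0 + lagrange_moment (S - {b}) 0"
      using lagrange_moment_Suc[of S a 0] lagrange_moment_Suc[of S b 0] prems ab by simp
    ultimately have "(a - b) * lagrange_moment S 0 = 0" by (simp add: algebra_simps)
    thus ?thesis using ab by simp
  qed
  have low: "lagrange_moment S k = 0" if "k < Suc n" for k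
    using that
  proof (induction k)
    case (Suc k)
    thus ?case using lagrange_moment_Suc[of S a k] IH[of "S - {a}" k] prems card_minus ab
      by simp
  qed (rule moment_0)
  have "lagrange_moment S (Suc n) = a * lagrange_moment S n + lagrange_moment (S - {a}) n"
    using lagrange_moment_Suc prems ab by blast
  also have "\<dots> = 1" using low[of n] IH[of "S - {a}" n] prems card_minus ab by simp
  finally show ?case using low prems by auto
qed

section \<open>Alon--Tarsi orientations from the Combinatorial Nullstellensatz\<close>

definition reverse_arcs :: "('v \<times> 'v) set \<Rightarrow> ('v \<times> 'v) set \<Rightarrow> ('v \<times> 'v) set" where
  "reverse_arcs X T = (X - T) \<union> T\<inverse>"

definition cn_term :: "'v set \<Rightarrow> ('v \<times> 'v) set \<Rightarrow> ('v \<Rightarrow> 'a::field set) \<Rightarrow> ('v \<Rightarrow> 'a) \<Rightarrow> 'a" where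
  "cn_term V R S c = (\<Prod>(u, v)\<in>R. c u - c v) * (\<Prod>v\<in>V. 1 / node_weight (S v) (c v))"

lemma cn_term_eq_0_iff:
  "finite V \<Longrightarrow> finite R \<Longrightarrow> cn_term V R S c = 0 \<longleftrightarrow> (\<exists>(u, v)\<in>R. c u = c v)"
  unfolding cn_term_def by (force simp: node_weight_nonzero)

lemma cn_term_cong:
  "R \<subseteq> V \<times> V \<Longrightarrow> \<forall>v\<in>V. c v = d v \<Longrightarrow> cn_term V R S c = cn_term V R S d"
  unfolding cn_term_def by (intro arg_cong2[where f = "(*)"] prod.cong) auto

locale oriented_graph =
  fixes V :: "'v set" and E :: "'v set set" and R :: "('v \<times> 'v) set"
  assumes finite_V: "finite V"
    and edges_in_V: "\<forall>e\<in>E. \<exists>u v. e = {u, v} \<and> u \<in> V \<and> v \<in> V \<and> u \<noteq> v"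
    and orientation_R: "is_orientation V E R"
begin

lemma orientation_arcD:
  assumes "is_orientation V E Q" "(u, v) \<in> Q"
  shows "u \<noteq> v \<and> {u, v} \<in> E"
  using assms unfolding is_orientation_def by blast

lemma orientation_total:
  "is_orientation V E Q \<Longrightarrow> u \<noteq> v \<Longrightarrow> {u, v} \<in> E \<Longrightarrow> (u, v) \<in> Q \<longleftrightarrow> (v, u) \<notin> Q"
  unfolding is_orientation_def by blast

lemma orientation_asym: "is_orientation V E Q \<Longrightarrow> (u, v) \<in> Q \<Longrightarrow> (v, u) \<notin> Q"
  using orientation_arcD orientation_total by blast

lemma orientation_subset: assumes "is_orientation V E Q" shows "Q \<subseteq> V \<times> V"
proof
  fix x assume "x \<in> Q"
  then obtain u v where x: "x = (u, v)" "{u, v} \<in> E"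
    using orientation_arcD[OF assms] by (cases x) auto
  then obtain a b where "{u, v} = {a, b}" "a \<in> V" "b \<in> V" using edges_in_V by blast
  thus "x \<in> V \<times> V" using x by (auto simp: doubleton_eq_iff)
qed

lemma finite_orientation: "is_orientation V E Q \<Longrightarrow> finite Q"
  using orientation_subset finite_V by (meson finite_SigmaI finite_subset)

lemma finite_R: "finite R"
  using finite_orientation orientation_R .

lemma orientation_reverse_arcs:
  assumes X: "is_orientation V E X" and T: "T \<subseteq> X"
  shows "is_orientation V E (reverse_arcs X T)"
  unfolding is_orientation_def
proof (intro conjI allI impI)
  show "\<forall>(u, v)\<in>reverse_arcs X T. u \<noteq> v \<and> {u, v} \<in> E"
  proof clarify
    fix u v assume "(u, v) \<in> reverse_arcs X T"
    hence "(u, v) \<in> X \<or> (v, u) \<in> X" using T unfolding reverse_arcs_def by auto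
    thus "u \<noteq> v \<and> {u, v} \<in> E"
      using orientation_arcD[OF X, of u v] orientation_arcD[OF X, of v u] by (auto simp: insert_commute)
  qed
next
  fix u v assume "u \<noteq> v \<and> {u, v} \<in> E"
  thus "((u, v) \<in> reverse_arcs X T) = ((v, u) \<notin> reverse_arcs X T)"
    using orientation_total[OF X, of u v] T unfolding reverse_arcs_def by auto
qed

lemma reverse_arcs_diff:
  assumes X: "is_orientation V E X" and Q: "is_orientation V E Q"
  shows "reverse_arcs X (X - Q) = Q"
proof (intro set_eqI iffI)
  fix x assume "x \<in> Q"
  then obtain u v where x: "x = (u, v)" "(u, v) \<in> Q" "(v, u) \<notin> Q" "u \<noteq> v" "{u, v} \<in> E"
    using orientation_arcD[OF Q] orientation_asym[OF Q] by (cases x) auto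
  thus "x \<in> reverse_arcs X (X - Q)"
    using orientation_total[OF X, of u v] unfolding reverse_arcs_def by auto
next
  fix x assume x: "x \<in> reverse_arcs X (X - Q)"
  obtain u v where uv: "x = (u, v)" by (cases x)
  show "x \<in> Q"
  proof (cases "(u, v) \<in> X")
    case True
    thus ?thesis using x uv orientation_asym[OF X, of u v] unfolding reverse_arcs_def by auto
  next
    case False
    hence vu: "(v, u) \<in> X" "(v, u) \<notin> Q" using x uv unfolding reverse_arcs_def by auto
    thus ?thesis using orientation_arcD[OF X vu(1)] orientation_total[OF Q, of v u] uv by blast
  qed
qed

lemma diff_reverse_arcs:
  "is_orientation V E X \<Longrightarrow> T \<subseteq> X \<Longrightarrow> X - reverse_arcs X T = T"
  using orientation_asym unfolding reverse_arcs_def by blast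

lemma card_reverse_arcs:
  assumes X: "is_orientation V E X" and T: "T \<subseteq> X"
  shows "card (reverse_arcs X T) = card X"
proof -
  have fX: "finite X" using finite_orientation X .
  have fT: "finite T" using fX T finite_subset by blast
  have "(X - T) \<inter> T\<inverse> = {}" using T orientation_asym[OF X] by auto
  hence "card (reverse_arcs X T) = card (X - T) + card T"
    unfolding reverse_arcs_def using fT fX by (simp add: card_Un_disjoint)
  thus ?thesis using card_Diff_subset[OF fT T] card_mono[OF fX T] by simp
qed

lemma finite_out_nbrs: "is_orientation V E Q \<Longrightarrow> finite {w. (v, w) \<in> Q}"
  using orientation_subset finite_V by (auto intro: finite_subset)

lemma finite_in_nbrs: "is_orientation V E Q \<Longrightarrow> finite {w. (w, v) \<in> Q}"
  using orientation_subset finite_V by (auto intro: finite_subset)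

lemma orientation_eq_Sigma: "is_orientation V E Q \<Longrightarrow> Q = Sigma V (\<lambda>v. {w. (v, w) \<in> Q})"
  using orientation_subset by auto

lemma sum_out_deg: assumes "is_orientation V E Q" shows "(\<Sum>v\<in>V. out_deg Q v) = card Q"
  unfolding out_deg_def
  by (subst orientation_eq_Sigma[OF assms]) (use finite_V finite_out_nbrs[OF assms] in \<open>simp add: card_SigmaI\<close>)

lemma prod_tails_eq_prod_power_out_deg:
  fixes c :: "'v \<Rightarrow> 'a::comm_monoid_mult"
  assumes "is_orientation V E Q"
  shows "(\<Prod>(u, v)\<in>Q. c u) = (\<Prod>v\<in>V. c v ^ out_deg Q v)"
proof -
  have "(\<Prod>(u, v)\<in>Q. c u) = (\<Prod>v\<in>V. \<Prod>w\<in>{w. (v, w) \<in> Q}. c v)"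
    by (subst orientation_eq_Sigma[OF assms], rule prod.Sigma[symmetric])
      (use finite_V finite_out_nbrs[OF assms] in auto)
  thus ?thesis unfolding out_deg_def by simp
qed

lemma out_deg_reverse_arcs:
  assumes X: "is_orientation V E X" and H: "H \<subseteq> X"
  shows "out_deg (reverse_arcs X H) v + out_deg H v = out_deg X v + in_deg H v"
proof -
  let ?out = "{w. (v, w) \<in> X}" and ?outH = "{w. (v, w) \<in> H}" and ?inH = "{w. (w, v) \<in> H}"
  have split: "{w. (v, w) \<in> reverse_arcs X H} = (?out - ?outH) \<union> ?inH"
    unfolding reverse_arcs_def by auto
  have disj: "(?out - ?outH) \<inter> ?inH = {}" using H orientation_asym[OF X] by auto
  have f1: "finite ?out" using finite_out_nbrs[OF X] .
  have f2: "finite ?inH"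
    by (rule finite_subset[OF _ finite_in_nbrs[OF X, of v]]) (use H in auto)
  have sub: "?outH \<subseteq> ?out" using H by auto
  have "out_deg (reverse_arcs X H) v = card (?out - ?outH) + in_deg H v"
    unfolding out_deg_def in_deg_def split using disj f1 f2 by (simp add: card_Un_disjoint)
  moreover have "card (?out - ?outH) + out_deg H v = out_deg X v"
    unfolding out_deg_def using card_Diff_subset[OF finite_subset[OF sub f1] sub] card_mono[OF f1 sub]
    by simp
  ultimately show ?thesis by simp
qed

lemma sum_eulerian_sign:
  assumes X: "is_orientation V E X"
  shows "(\<Sum>H | eulerian_sub V X H. (-1::int) ^ card H) = int (EE V X) - int (EO V X)"
proof -
  let ?Ev = "{H. eulerian_sub V X H \<and> even (card H)}" and ?Od = "{H. eulerian_sub V X H \<and> odd (card H)}"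
  have "{H. eulerian_sub V X H} \<subseteq> Pow X" by (auto simp: eulerian_sub_def)
  hence fin: "finite ?Ev" "finite ?Od" using finite_orientation[OF X] by (auto intro: finite_subset)
  have split: "{H. eulerian_sub V X H} = ?Ev \<union> ?Od" by auto
  have "(\<Sum>H | eulerian_sub V X H. (-1::int) ^ card H) = (\<Sum>H\<in>?Ev. (-1) ^ card H) + (\<Sum>H\<in>?Od. (-1) ^ card H)"
    by (subst split, rule sum.union_disjoint) (use fin in auto)
  also have "\<dots> = (\<Sum>H\<in>?Ev. 1) + (\<Sum>H\<in>?Od. -1)"
    by (intro arg_cong2[where f = "(+)"] sum.cong) auto
  finally show ?thesis unfolding EE_def EO_def by simp
qed

definition reversals_with_out_deg :: "('v \<Rightarrow> nat) \<Rightarrow> ('v \<times> 'v) set set" where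
  "reversals_with_out_deg d = {T. T \<subseteq> R \<and> (\<forall>v\<in>V. out_deg (reverse_arcs R T) v = d v)}"

lemma graph_poly_expansion:
  fixes c :: "'v \<Rightarrow> 'a::comm_ring_1"
  shows "(\<Prod>(u, v)\<in>R. c u - c v) =
    (\<Sum>T\<in>Pow R. (-1) ^ card T * (\<Prod>v\<in>V. c v ^ out_deg (reverse_arcs R T) v))"
proof -
  have "(\<Prod>(u, v)\<in>R. c u - c v) = (\<Prod>x\<in>R. (\<lambda>(u, v). - c v) x + (\<lambda>(u, v). c u) x)"
    by (intro prod.cong) auto
  also have "\<dots> = (\<Sum>T\<in>Pow R. (\<Prod>x\<in>T. (\<lambda>(u, v). - c v) x) * (\<Prod>x\<in>R - T. (\<lambda>(u, v). c u) x))"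
    by (rule prod_add[OF finite_R])
  also have "\<dots> = (\<Sum>T\<in>Pow R. (-1) ^ card T * (\<Prod>v\<in>V. c v ^ out_deg (reverse_arcs R T) v))"
  proof (intro sum.cong refl)
    fix T assume T: "T \<in> Pow R"
    have heads: "(\<Prod>x\<in>T. (\<lambda>(u, v). - c v) x) = (-1) ^ card T * (\<Prod>(u, v)\<in>T\<inverse>. c u)"
    proof -
      have "(\<Prod>x\<in>T. (\<lambda>(u, v). - c v) x) = (\<Prod>x\<in>T. (-1) * (\<lambda>(u, v). c v) x)"
        by (intro prod.cong) auto
      also have "\<dots> = (\<Prod>x\<in>T. (-1::'a)) * (\<Prod>x\<in>T. (\<lambda>(u, v). c v) x)" by (rule prod.distrib)
      also have "\<dots> = (-1) ^ card T * (\<Prod>(u, v)\<in>T. c v)" by simp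
      also have "(\<Prod>(u, v)\<in>T. c v) = (\<Prod>(u, v)\<in>T\<inverse>. c u)"
        by (rule prod.reindex_bij_witness[of _ prod.swap prod.swap]) auto
      finally show ?thesis .
    qed
    have "(R - T) \<inter> T\<inverse> = {}" using T orientation_asym[OF orientation_R] by auto
    moreover have "finite T" using finite_R T finite_subset by blast
    ultimately have "(\<Prod>(u, v)\<in>R - T. c u) * (\<Prod>(u, v)\<in>T\<inverse>. c u) = (\<Prod>(u, v)\<in>reverse_arcs R T. c u)"
      unfolding reverse_arcs_def using finite_R by (simp add: prod.union_disjoint)
    also have "\<dots> = (\<Prod>v\<in>V. c v ^ out_deg (reverse_arcs R T) v)"
      using T by (simp add: prod_tails_eq_prod_power_out_deg orientation_reverse_arcs orientation_R)
    finally show "(\<Prod>x\<in>T. (\<lambda>(u, v). - c v) x) * (\<Prod>x\<in>R - T. (\<lambda>(u, v). c u) x) =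
          (-1) ^ card T * (\<Prod>v\<in>V. c v ^ out_deg (reverse_arcs R T) v)"
      using heads by (simp add: mult_ac)
  qed
  finally show ?thesis .
qed

text \<open>Expanding the graph polynomial and summing each monomial against the list weights,
  \<open>lagrange_moment_eq\<close> kills every monomial except those with exponent \<open>card (S v) - 1\<close>
  at every vertex; the degree hypothesis rules out exponents above that.\<close>
lemma sum_cn_term_eq:
  fixes S :: "'v \<Rightarrow> 'a::field set"
  assumes S: "\<forall>v\<in>V. finite (S v) \<and> S v \<noteq> {}"
    and deg: "(\<Sum>v\<in>V. card (S v) - 1) = card R"
  shows "(\<Sum>c\<in>PiE V S. cn_term V R S c) =
    of_int (\<Sum>T\<in>reversals_with_out_deg (\<lambda>v. card (S v) - 1). (-1) ^ card T)"
proof -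
  let ?d = "\<lambda>T v. out_deg (reverse_arcs R T) v"
  let ?good = "\<lambda>T. \<forall>v\<in>V. ?d T v = card (S v) - 1"
  have "(\<Sum>c\<in>PiE V S. cn_term V R S c) =
      (\<Sum>c\<in>PiE V S. \<Sum>T\<in>Pow R. (-1) ^ card T * ((\<Prod>v\<in>V. c v ^ ?d T v) * (\<Prod>v\<in>V. 1 / node_weight (S v) (c v))))"
    unfolding cn_term_def by (simp only: graph_poly_expansion sum_distrib_right mult.assoc)
  also have "\<dots> = (\<Sum>T\<in>Pow R. (-1) ^ card T * (\<Sum>c\<in>PiE V S. \<Prod>v\<in>V. c v ^ ?d T v / node_weight (S v) (c v)))"
    by (subst sum.swap) (simp add: sum_distrib_left prod.distrib[symmetric] divide_inverse)
  also have "\<dots> = (\<Sum>T\<in>Pow R. (-1) ^ card T * (\<Prod>v\<in>V. lagrange_moment (S v) (?d T v)))"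
    unfolding lagrange_moment_def by (subst prod_sum_PiE) (use finite_V S in auto)
  also have "\<dots> = (\<Sum>T\<in>Pow R. if ?good T then (-1) ^ card T else 0)"
  proof (intro sum.cong refl)
    fix T assume T: "T \<in> Pow R"
    have moment: "lagrange_moment (S v) (?d T v) = (if ?d T v = card (S v) - 1 then 1 else 0)"
      if "v \<in> V" "?d T v \<le> card (S v) - 1" for v
      using lagrange_moment_eq[of "S v" "card (S v) - 1"] S that by (simp add: card_gt_0_iff)
    show "(-1) ^ card T * (\<Prod>v\<in>V. lagrange_moment (S v) (?d T v)) = (if ?good T then (-1) ^ card T else 0)"
    proof (cases "\<exists>v\<in>V. ?d T v < card (S v) - 1")
      case True
      then obtain v where v: "v \<in> V" "?d T v < card (S v) - 1" by blast
      hence "lagrange_moment (S v) (?d T v) = 0" using moment by simp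
      thus ?thesis using v finite_V by (auto simp: prod_zero_iff)
    next
      case False
      have "(\<Sum>v\<in>V. ?d T v) = card R"
        using T by (simp add: sum_out_deg card_reverse_arcs orientation_reverse_arcs orientation_R)
      hence "?good T"
        using sum_mono_inv[of "\<lambda>v. card (S v) - 1" V] False deg finite_V by (metis not_less)
      thus ?thesis using moment by simp
    qed
  qed
  also have "\<dots> = of_int (\<Sum>T\<in>reversals_with_out_deg (\<lambda>v. card (S v) - 1). (-1) ^ card T)"
    unfolding reversals_with_out_deg_def using finite_R
    by (simp add: sum.inter_filter[symmetric] Pow_def)
  finally show ?thesis .
qed

lemma out_deg_reverse_arcs_eq_iff:
  assumes "is_orientation V E X" "H \<subseteq> X"
  shows "out_deg (reverse_arcs X H) v = out_deg X v \<longleftrightarrow> in_deg H v = out_deg H v"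
  using out_deg_reverse_arcs[OF assms, of v] by linarith

lemma parity_diff_reverse_arcs:
  assumes D: "is_orientation V E D" and H: "H \<subseteq> D"
  shows "(-1::int) ^ card (R - reverse_arcs D H) = (-1) ^ card (R - D) * (-1) ^ card H"
proof -
  have fH: "finite H" using finite_orientation[OF D] H finite_subset by blast
  have fRD: "finite (R - D)" using finite_R by simp
  have sub: "(H - R)\<inverse> \<subseteq> R - D"
  proof
    fix x assume "x \<in> (H - R)\<inverse>"
    then obtain u v where uv: "x = (u, v)" "(v, u) \<in> H" "(v, u) \<notin> R" by auto
    hence "v \<noteq> u" "{v, u} \<in> E" using orientation_arcD[OF D] H by auto
    thus "x \<in> R - D"
      using uv H orientation_total[OF orientation_R, of v u] orientation_asym[OF D, of v u] by auto
  qed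
  have split: "R - reverse_arcs D H = (R \<inter> H) \<union> ((R - D) - (H - R)\<inverse>)"
    using H orientation_asym[OF D] orientation_asym[OF orientation_R] unfolding reverse_arcs_def by blast
  have "card (R - reverse_arcs D H) = card (R \<inter> H) + card ((R - D) - (H - R)\<inverse>)"
    unfolding split using H fH fRD by (intro card_Un_disjoint) auto
  moreover have "card ((R - D) - (H - R)\<inverse>) + card (H - R) = card (R - D)"
    using card_Diff_subset[OF finite_subset[OF sub fRD] sub] card_mono[OF fRD sub] by simp
  moreover have "card H = card (R \<inter> H) + card (H - R)"
    using fH by (metis card_Int_Diff inf_commute)
  ultimately have "card (R - reverse_arcs D H) + 2 * card H = card (R - D) + card H + 2 * card (R \<inter> H)"
    by simp
  hence "(-1::int) ^ (card (R - reverse_arcs D H) + 2 * card H) = (-1) ^ (card (R - D) + card H + 2 * card (R \<inter> H))"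
    by (simp only:)
  thus ?thesis by (simp add: power_add power_mult)
qed

lemma bij_betw_eulerian_reversals:
  assumes D: "is_orientation V E D"
  shows "bij_betw (\<lambda>H. R - reverse_arcs D H) {H. eulerian_sub V D H} (reversals_with_out_deg (out_deg D))"
proof (rule bij_betw_byWitness[where f' = "\<lambda>T. D - reverse_arcs R T"])
  have rev_rev: "reverse_arcs R (R - reverse_arcs D H) = reverse_arcs D H" if "H \<subseteq> D" for H
    by (rule reverse_arcs_diff[OF orientation_R orientation_reverse_arcs[OF D that]])
  have rev_rev': "reverse_arcs D (D - reverse_arcs R T) = reverse_arcs R T" if "T \<subseteq> R" for T
    by (rule reverse_arcs_diff[OF D orientation_reverse_arcs[OF orientation_R that]])
  show "\<forall>H\<in>{H. eulerian_sub V D H}. D - reverse_arcs R (R - reverse_arcs D H) = H"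
    using rev_rev diff_reverse_arcs[OF D] by (auto simp: eulerian_sub_def)
  show "\<forall>T\<in>reversals_with_out_deg (out_deg D). R - reverse_arcs D (D - reverse_arcs R T) = T"
    using rev_rev' diff_reverse_arcs[OF orientation_R] by (auto simp: reversals_with_out_deg_def)
  show "(\<lambda>H. R - reverse_arcs D H) ` {H. eulerian_sub V D H} \<subseteq> reversals_with_out_deg (out_deg D)"
    using rev_rev out_deg_reverse_arcs_eq_iff[OF D]
    by (auto simp: eulerian_sub_def reversals_with_out_deg_def)
  show "(\<lambda>T. D - reverse_arcs R T) ` reversals_with_out_deg (out_deg D) \<subseteq> {H. eulerian_sub V D H}"
  proof clarify
    fix T assume "T \<in> reversals_with_out_deg (out_deg D)"
    hence "\<forall>v\<in>V. out_deg (reverse_arcs D (D - reverse_arcs R T)) v = out_deg D v"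
      using rev_rev' by (simp add: reversals_with_out_deg_def)
    thus "eulerian_sub V D (D - reverse_arcs R T)"
      using out_deg_reverse_arcs_eq_iff[OF D, of "D - reverse_arcs R T"] by (auto simp: eulerian_sub_def)
  qed
qed

lemma sum_reversals_sign:
  assumes D: "is_orientation V E D"
  shows "(\<Sum>T\<in>reversals_with_out_deg (out_deg D). (-1::int) ^ card T)
    = (-1) ^ card (R - D) * (int (EE V D) - int (EO V D))"
proof -
  have "(\<Sum>T\<in>reversals_with_out_deg (out_deg D). (-1::int) ^ card T)
      = (\<Sum>H | eulerian_sub V D H. (-1) ^ card (R - reverse_arcs D H))"
    by (rule sum.reindex_bij_betw[OF bij_betw_eulerian_reversals[OF D], symmetric])
  also have "\<dots> = (\<Sum>H | eulerian_sub V D H. (-1) ^ card (R - D) * (-1) ^ card H)"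
    using parity_diff_reverse_arcs[OF D] by (intro sum.cong) (auto simp: eulerian_sub_def)
  also have "\<dots> = (-1) ^ card (R - D) * (int (EE V D) - int (EO V D))"
    by (simp add: sum_distrib_left[symmetric] sum_eulerian_sign[OF D])
  finally show ?thesis .
qed

theorem f_AT_if_sum_cn_term_nonzero:
  fixes S :: "'v \<Rightarrow> 'a::field set" and f :: "'v \<Rightarrow> nat"
  assumes S: "\<forall>v\<in>V. finite (S v) \<and> S v \<noteq> {}"
    and deg: "(\<Sum>v\<in>V. card (S v) - 1) = card R"
    and nonzero: "(\<Sum>c\<in>PiE V S. cn_term V R S c) \<noteq> 0"
    and card_S_le: "\<forall>v\<in>V. card (S v) \<le> f v"
  shows "f_AT V E f"
proof -
  let ?d = "\<lambda>v. card (S v) - 1"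
  have "(\<Sum>T\<in>reversals_with_out_deg ?d. (-1::int) ^ card T) \<noteq> 0"
    using nonzero unfolding sum_cn_term_eq[OF S deg] by (metis of_int_0)
  then obtain T where T: "T \<in> reversals_with_out_deg ?d" by fastforce
  define D where "D = reverse_arcs R T"
  have D: "is_orientation V E D" and out_D: "\<forall>v\<in>V. out_deg D v = ?d v"
    using T orientation_reverse_arcs[OF orientation_R] unfolding D_def reversals_with_out_deg_def by auto
  hence "reversals_with_out_deg ?d = reversals_with_out_deg (out_deg D)"
    unfolding reversals_with_out_deg_def by auto
  hence "EE V D \<noteq> EO V D"
    using \<open>(\<Sum>T\<in>reversals_with_out_deg ?d. (-1::int) ^ card T) \<noteq> 0\<close> sum_reversals_sign[OF D] by auto
  moreover have "out_deg D v < f v" if "v \<in> V" for v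
  proof -
    have "card (S v) > 0" using S that by (simp add: card_gt_0_iff)
    thus ?thesis using out_D card_S_le that by fastforce
  qed
  ultimately show ?thesis using D unfolding f_AT_def AT_orientation_def by blast
qed

end

section \<open>The join \<open>K_s \<or> K_{2*t}\<close> and a reference orientation\<close>

lemma Inl_mem_join_verts[simp]: "Inl i \<in> join_verts s t \<longleftrightarrow> i < s"
  unfolding join_verts_def by auto

lemma Inr_mem_join_verts[simp]: "Inr (j, k) \<in> join_verts s t \<longleftrightarrow> j < t \<and> k < 2"
  unfolding join_verts_def by auto

lemma doubleton_mem_join_edges:
  "{u, v} \<in> join_edges s t \<longleftrightarrow>
     u \<in> join_verts s t \<and> v \<in> join_verts s t \<and> u \<noteq> v \<and> \<not> (\<exists>j. {u, v} = {Inr (j, 0), Inr (j, 1)})"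
  unfolding join_edges_def by (auto simp: doubleton_eq_iff)

lemma Inl_Inl_mem_join_edges[simp]: "{Inl i, Inl i'} \<in> join_edges s t \<longleftrightarrow> i < s \<and> i' < s \<and> i \<noteq> i'"
  unfolding doubleton_mem_join_edges by (auto simp: doubleton_eq_iff)

lemma Inl_Inr_mem_join_edges[simp]: "{Inl i, Inr (j, k)} \<in> join_edges s t \<longleftrightarrow> i < s \<and> j < t \<and> k < 2"
  unfolding doubleton_mem_join_edges by (auto simp: doubleton_eq_iff)

lemma Inr_Inr_mem_join_edges[simp]:
  "{Inr (j, k), Inr (j', k')} \<in> join_edges s t \<longleftrightarrow> j < t \<and> j' < t \<and> k < 2 \<and> k' < 2 \<and> j \<noteq> j'"
  unfolding doubleton_mem_join_edges by (auto simp: doubleton_eq_iff less_2_cases_iff)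

definition ordered_pairs :: "nat \<Rightarrow> (nat \<times> nat) set" where
  "ordered_pairs n = {(i, i'). i < i' \<and> i' < n}"

lemma ordered_pairs_subset: "ordered_pairs n \<subseteq> {..<n} \<times> {..<n}"
  unfolding ordered_pairs_def by auto

lemma finite_ordered_pairs[simp]: "finite (ordered_pairs n)"
  using ordered_pairs_subset by (rule finite_subset) simp

lemma card_ordered_pairs: "card (ordered_pairs n) = (\<Sum>i<n. i)"
proof (induction n)
  case 0 thus ?case by (simp add: ordered_pairs_def)
next
  case (Suc n)
  have "ordered_pairs (Suc n) = ordered_pairs n \<union> (\<lambda>i. (i, n)) ` {..<n}"
    unfolding ordered_pairs_def by auto
  also have "card \<dots> = card (ordered_pairs n) + card ((\<lambda>i. (i, n)) ` {..<n})"
    by (rule card_Un_disjoint) (simp_all, auto simp: ordered_pairs_def)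
  finally have "card (ordered_pairs (Suc n)) = card (ordered_pairs n) + n"
    by (simp add: card_image inj_on_def)
  thus ?case using Suc by simp
qed

lemma prod_ordered_pairs_power4:
  fixes \<beta> :: "nat \<Rightarrow> 'a::comm_ring_1"
  assumes bij: "bij_betw \<beta> {..<n} Y"
  shows "(\<Prod>(j, j')\<in>ordered_pairs n. (\<beta> j - \<beta> j') ^ 4) = (\<Prod>(y, y')\<in>{(y, y'). y \<in> Y \<and> y' \<in> Y \<and> y \<noteq> y'}. (y - y') ^ 2)"
proof -
  define off where "off = {(j, j'). j < n \<and> j' < n \<and> j \<noteq> j'}"
  have off_split: "off = ordered_pairs n \<union> prod.swap ` ordered_pairs n"
    unfolding off_def ordered_pairs_def by auto
  have "(\<Prod>(j, j')\<in>off. (\<beta> j - \<beta> j') ^ 2)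
      = (\<Prod>(j, j')\<in>ordered_pairs n. (\<beta> j - \<beta> j') ^ 2) * (\<Prod>(j, j')\<in>prod.swap ` ordered_pairs n. (\<beta> j - \<beta> j') ^ 2)"
    unfolding off_split using finite_ordered_pairs[of n] by (intro prod.union_disjoint) (auto simp: ordered_pairs_def)
  also have "(\<Prod>(j, j')\<in>prod.swap ` ordered_pairs n. (\<beta> j - \<beta> j') ^ 2) = (\<Prod>(j, j')\<in>ordered_pairs n. (\<beta> j - \<beta> j') ^ 2)"
    by (subst prod.reindex) (auto simp: power2_commute case_prod_beta)
  finally have "(\<Prod>(j, j')\<in>off. (\<beta> j - \<beta> j') ^ 2) = (\<Prod>(j, j')\<in>ordered_pairs n. (\<beta> j - \<beta> j') ^ 4)"
    by (simp add: prod.distrib[symmetric] case_prod_beta power_add[symmetric])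
  moreover have "bij_betw (map_prod \<beta> \<beta>) off {(y, y'). y \<in> Y \<and> y' \<in> Y \<and> y \<noteq> y'}"
    using bij unfolding off_def bij_betw_def inj_on_def by (auto simp: image_iff)
  ultimately show ?thesis
    using prod.reindex_bij_betw[of "map_prod \<beta> \<beta>" off _ "\<lambda>(y, y'). (y - y') ^ 2"] by (simp add: case_prod_beta)
qed

lemma inj_on_ge_imp_eq:
  assumes inj: "inj_on h {..<n}" and ge: "\<forall>i<n. i \<le> h i \<and> h i < (n::nat)"
  shows "\<forall>i<n. h i = i"
proof (rule ccontr)
  assume "\<not> (\<forall>i<n. h i = i)"
  then obtain i0 where "i0 < n" "h i0 \<noteq> i0" by blast
  hence i0: "i0 < n" "i0 < h i0" using ge by (auto simp: order_less_le)
  have img: "h ` {..<n} = {..<n}"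
  proof (rule card_subset_eq)
    show "h ` {..<n} \<subseteq> {..<n}" using ge by auto
  qed (simp_all add: card_image[OF inj])
  have "(\<Sum>i<n. i) < (\<Sum>i<n. h i)"
    by (rule sum_strict_mono_ex1) (use ge i0 in auto)
  also have "\<dots> = (\<Sum>i\<in>h ` {..<n}. i)"
    using sum.reindex[OF inj, of "\<lambda>i. i"] by simp
  finally show False unfolding img by simp
qed

type_synonym join_vert = "nat + nat \<times> nat"

definition clique_arcs :: "nat \<Rightarrow> (join_vert \<times> join_vert) set" where
  "clique_arcs s = (\<lambda>(i, i'). (Inl i, Inl i')) ` ordered_pairs s"

definition cross_arcs :: "nat \<Rightarrow> nat \<Rightarrow> (join_vert \<times> join_vert) set" where
  "cross_arcs s t = (\<lambda>(i, j, k). (Inl i, Inr (j, k))) ` ({..<s} \<times> {..<t} \<times> {..<2})"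

definition part_arcs :: "nat \<Rightarrow> (join_vert \<times> join_vert) set" where
  "part_arcs t = (\<lambda>((j, j'), (k, k')). (Inr (j, k), Inr (j', k'))) ` (ordered_pairs t \<times> {..<2} \<times> {..<2})"

definition join_arcs :: "nat \<Rightarrow> nat \<Rightarrow> (join_vert \<times> join_vert) set" where
  "join_arcs s t = clique_arcs s \<union> cross_arcs s t \<union> part_arcs t"

lemma mem_join_arcs_iff:
  "(Inl i, Inl i') \<in> join_arcs s t \<longleftrightarrow> i < i' \<and> i' < s"
  "(Inl i, Inr (j, k)) \<in> join_arcs s t \<longleftrightarrow> i < s \<and> j < t \<and> k < 2"
  "(Inr (j, k), Inl i) \<notin> join_arcs s t"
  "(Inr (j, k), Inr (j', k')) \<in> join_arcs s t \<longleftrightarrow> j < j' \<and> j' < t \<and> k < 2 \<and> k' < 2"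
  unfolding join_arcs_def clique_arcs_def cross_arcs_def part_arcs_def ordered_pairs_def
  by (auto simp: image_iff)

lemma join_arcs_orientation: "is_orientation (join_verts s t) (join_edges s t) (join_arcs s t)"
  unfolding is_orientation_def
proof (intro conjI allI impI ballI)
  fix x assume "x \<in> join_arcs s t"
  thus "case x of (u, v) \<Rightarrow> u \<noteq> v \<and> {u, v} \<in> join_edges s t"
    unfolding join_arcs_def clique_arcs_def cross_arcs_def part_arcs_def ordered_pairs_def by auto
next
  fix u v :: join_vert assume "u \<noteq> v \<and> {u, v} \<in> join_edges s t"
  thus "(u, v) \<in> join_arcs s t \<longleftrightarrow> (v, u) \<notin> join_arcs s t"
    by (cases u; cases v) (auto simp: mem_join_arcs_iff insert_commute)
qed

lemma finite_join_verts: "finite (join_verts s t)"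
  unfolding join_verts_def by auto

lemma oriented_graph_join: "oriented_graph (join_verts s t) (join_edges s t) (join_arcs s t)"
proof
  show "\<forall>e\<in>join_edges s t. \<exists>u v. e = {u, v} \<and> u \<in> join_verts s t \<and> v \<in> join_verts s t \<and> u \<noteq> v"
    unfolding join_edges_def by blast
qed (simp_all add: finite_join_verts join_arcs_orientation)

lemma join_arcs_subset: "join_arcs s t \<subseteq> join_verts s t \<times> join_verts s t"
  using oriented_graph.orientation_subset[OF oriented_graph_join join_arcs_orientation] .

lemma card_join_arcs: "card (join_arcs s t) = card (ordered_pairs s) + 2 * s * t + 4 * card (ordered_pairs t)"
proof -
  have "card (clique_arcs s) = card (ordered_pairs s)"
    unfolding clique_arcs_def by (rule card_image) (auto simp: inj_on_def)
  moreover have "card (cross_arcs s t) = 2 * s * t"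
    unfolding cross_arcs_def by (subst card_image) (auto simp: inj_on_def card_cartesian_product)
  moreover have "card (part_arcs t) = 4 * card (ordered_pairs t)"
    unfolding part_arcs_def by (subst card_image) (auto simp: inj_on_def card_cartesian_product)
  moreover have "clique_arcs s \<inter> cross_arcs s t = {}" "(clique_arcs s \<union> cross_arcs s t) \<inter> part_arcs t = {}"
    unfolding clique_arcs_def cross_arcs_def part_arcs_def by auto
  ultimately show ?thesis
    unfolding join_arcs_def by (simp add: card_Un_disjoint clique_arcs_def cross_arcs_def part_arcs_def)
qed

lemma sum_join_verts:
  "(\<Sum>v\<in>join_verts s t. g v) = (\<Sum>i<s. g (Inl i)) + (\<Sum>j<t. g (Inr (j, 0)) + g (Inr (j, 1)))"
proof -
  have "(\<Sum>v\<in>join_verts s t. g v) = (\<Sum>v\<in>Inl ` {..<s}. g v) + (\<Sum>v\<in>Inr ` ({..<t} \<times> {..<2}). g v)"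
    unfolding join_verts_def by (rule sum.union_disjoint) auto
  also have "\<dots> = (\<Sum>i<s. g (Inl i)) + (\<Sum>j<t. \<Sum>k<2. g (Inr (j, k)))"
    by (simp add: sum.reindex sum.cartesian_product)
  finally show ?thesis by (simp add: numeral_2_eq_2)
qed

lemma prod_join_verts:
  "(\<Prod>v\<in>join_verts s t. g v) = (\<Prod>i<s. g (Inl i)) * (\<Prod>j<t. g (Inr (j, 0)) * g (Inr (j, 1)))"
proof -
  have "(\<Prod>v\<in>join_verts s t. g v) = (\<Prod>v\<in>Inl ` {..<s}. g v) * (\<Prod>v\<in>Inr ` ({..<t} \<times> {..<2}). g v)"
    unfolding join_verts_def by (rule prod.union_disjoint) auto
  also have "\<dots> = (\<Prod>i<s. g (Inl i)) * (\<Prod>j<t. \<Prod>k<2. g (Inr (j, k)))"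
    by (simp add: prod.reindex prod.cartesian_product)
  finally show ?thesis by (simp add: numeral_2_eq_2)
qed

definition join_coloring :: "nat \<Rightarrow> (nat \<Rightarrow> real) \<Rightarrow> join_vert \<Rightarrow> real" where
  "join_coloring t \<beta> v = (case v of Inl i \<Rightarrow> real (t + i) | Inr (j, k) \<Rightarrow> \<beta> j)"

lemma join_coloring_simps[simp]:
  "join_coloring t \<beta> (Inl i) = real (t + i)" "join_coloring t \<beta> (Inr (j, k)) = \<beta> j"
  unfolding join_coloring_def by simp_all

lemma prod_join_arcs:
  "(\<Prod>x\<in>join_arcs s t. g x) = (\<Prod>x\<in>clique_arcs s. g x) * (\<Prod>x\<in>cross_arcs s t. g x) * (\<Prod>x\<in>part_arcs t. g x)"
proof -
  have "clique_arcs s \<inter> cross_arcs s t = {}" "(clique_arcs s \<union> cross_arcs s t) \<inter> part_arcs t = {}"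
    unfolding clique_arcs_def cross_arcs_def part_arcs_def by auto
  thus ?thesis
    unfolding join_arcs_def by (simp add: prod.union_disjoint clique_arcs_def cross_arcs_def part_arcs_def)
qed

lemma prod_clique_arcs_join_coloring:
  "(\<Prod>(u, v)\<in>clique_arcs s. join_coloring t \<beta> u - join_coloring t \<beta> v)
    = (\<Prod>(i, i')\<in>ordered_pairs s. real (t + i) - real (t + i'))"
  unfolding clique_arcs_def by (subst prod.reindex) (auto simp: inj_on_def intro!: prod.cong)

lemma prod_cross_arcs_join_coloring:
  assumes bij: "bij_betw \<beta> {..<t} Y"
  shows "(\<Prod>(u, v)\<in>cross_arcs s t. join_coloring t \<beta> u - join_coloring t \<beta> v)
    = (\<Prod>i<s. \<Prod>y\<in>Y. (real (t + i) - y) ^ 2)"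
proof -
  have "(\<Prod>(u, v)\<in>cross_arcs s t. join_coloring t \<beta> u - join_coloring t \<beta> v)
      = (\<Prod>(i, j, k)\<in>{..<s} \<times> {..<t} \<times> {..<2::nat}. real (t + i) - \<beta> j)"
    unfolding cross_arcs_def by (subst prod.reindex) (auto simp: inj_on_def intro!: prod.cong)
  also have "\<dots> = (\<Prod>i<s. \<Prod>j<t. \<Prod>k<2::nat. real (t + i) - \<beta> j)"
    by (simp only: prod.cartesian_product)
  also have "\<dots> = (\<Prod>i<s. \<Prod>j<t. (real (t + i) - \<beta> j) ^ 2)"
    by simp
  also have "\<dots> = (\<Prod>i<s. \<Prod>y\<in>Y. (real (t + i) - y) ^ 2)"
    by (intro prod.cong refl prod.reindex_bij_betw[OF bij])
  finally show ?thesis .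
qed

lemma prod_part_arcs_join_coloring:
  assumes bij: "bij_betw \<beta> {..<t} Y"
  shows "(\<Prod>(u, v)\<in>part_arcs t. join_coloring t \<beta> u - join_coloring t \<beta> v)
    = (\<Prod>(y, y')\<in>{(y, y'). y \<in> Y \<and> y' \<in> Y \<and> y \<noteq> y'}. (y - y') ^ 2)"
proof -
  have "(\<Prod>(u, v)\<in>part_arcs t. join_coloring t \<beta> u - join_coloring t \<beta> v)
      = (\<Prod>((j, j'), k, k')\<in>ordered_pairs t \<times> {..<2::nat} \<times> {..<2::nat}. \<beta> j - \<beta> j')"
    unfolding part_arcs_def by (subst prod.reindex) (auto simp: inj_on_def intro!: prod.cong)
  also have "\<dots> = (\<Prod>(j, j')\<in>ordered_pairs t. (\<beta> j - \<beta> j') ^ 4)"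
    by (simp add: prod.cartesian_product' case_prod_beta)
  also have "\<dots> = (\<Prod>(y, y')\<in>{(y, y'). y \<in> Y \<and> y' \<in> Y \<and> y \<noteq> y'}. (y - y') ^ 2)"
    by (rule prod_ordered_pairs_power4[OF bij])
  finally show ?thesis .
qed

section \<open>Maximum cliques and proper list colorings\<close>

definition join_column :: "nat \<Rightarrow> join_vert \<Rightarrow> nat" where
  "join_column s v = (case v of Inl i \<Rightarrow> i | Inr (j, k) \<Rightarrow> s + j)"

locale join_max_clique =
  fixes s t :: nat and A :: "join_vert set"
  assumes t_pos: "t \<ge> 1"
    and A_subset: "A \<subseteq> join_verts s t"
    and card_A: "card A = s + t"
    and clique_A: "is_clique (join_edges s t) A"
begin

text \<open>The vertices of \<open>K_s \<or> K_{2*t}\<close> fall into \<open>s + t\<close> columns (the singletons of \<open>K_s\<close>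
  and the parts of \<open>K_{2*t}\<close>), each an independent set; so a clique of size \<open>s + t\<close>
  meets every column exactly once.\<close>
lemma join_column_inj_on_A: "inj_on (join_column s) A"
proof (rule inj_onI, rule ccontr)
  fix x y assume xy: "x \<in> A" "y \<in> A" "join_column s x = join_column s y" "x \<noteq> y"
  hence "{x, y} \<in> join_edges s t" using clique_A unfolding is_clique_def by blast
  thus False using xy A_subset
    by (cases x; cases y) (auto simp: join_column_def split: prod.splits)
qed

lemma join_column_image_A: "join_column s ` A = {..<s + t}"
proof (rule card_subset_eq)
  show "join_column s ` A \<subseteq> {..<s + t}"
    using A_subset by (auto simp: join_column_def join_verts_def)
qed (simp_all add: card_image[OF join_column_inj_on_A] card_A)

lemma Inl_mem_A: "i < s \<Longrightarrow> Inl i \<in> A"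
proof -
  assume "i < s"
  then obtain x where x: "x \<in> A" "join_column s x = i" using join_column_image_A
    by (metis trans_less_add1 lessThan_iff imageE)
  thus "Inl i \<in> A" using \<open>i < s\<close> by (cases x) (auto simp: join_column_def)
qed

lemma part_meets_A: "j < t \<Longrightarrow> (Inr (j, 0) \<in> A) \<noteq> (Inr (j, 1) \<in> A)"
proof
  assume j: "j < t" and same: "(Inr (j, 0) \<in> A) = (Inr (j, 1) \<in> A)"
  obtain x where "x \<in> A" "join_column s x = s + j" using join_column_image_A j
    by (metis add_less_cancel_left lessThan_iff imageE)
  hence "x = Inr (j, 0) \<or> x = Inr (j, 1)"
    using A_subset by (auto simp: join_column_def join_verts_def less_2_cases_iff)
  hence "Inr (j, 0) \<in> A" "Inr (j, 1) \<in> A" using same \<open>x \<in> A\<close> by auto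
  with clique_A have "{Inr (j, 0), Inr (j, 1::nat)} \<in> join_edges s t"
    unfolding is_clique_def by (metis old.prod.inject sum.inject(2) zero_neq_one)
  thus False by simp
qed

text \<open>Shrinking the lists of the \<open>K_s\<close> vertices forces \<open>Inl i\<close> to take color \<open>t + i\<close>
  in every proper coloring from the lists; this is what makes all nonzero terms of the
  Nullstellensatz sum equal.\<close>
definition join_lists :: "join_vert \<Rightarrow> real set" where
  "join_lists v = (case v of
      Inl i \<Rightarrow> real ` ({..<t} \<union> {t + i..<s + t})
    | Inr _ \<Rightarrow> real ` (if v \<in> A then {..<s + t} else {..<t}))"

lemma join_lists_Inl: "join_lists (Inl i) = real ` ({..<t} \<union> {t + i..<s + t})"
  unfolding join_lists_def by simp

lemma join_lists_Inr: "join_lists (Inr p) = real ` (if Inr p \<in> A then {..<s + t} else {..<t})"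
  unfolding join_lists_def by simp

lemma finite_join_lists: "finite (join_lists v)"
  unfolding join_lists_def by (cases v) auto

lemma join_lists_nonempty: "join_lists v \<noteq> {}"
  using t_pos unfolding join_lists_def by (cases v) (auto simp: lessThan_empty_iff)

lemma card_join_lists_Inl: "i < s \<Longrightarrow> card (join_lists (Inl i)) = t + (s - i)"
proof -
  have "card ({..<t} \<union> {t + i..<s + t}) = card {..<t} + card {t + i..<s + t}"
    by (rule card_Un_disjoint) auto
  thus "i < s \<Longrightarrow> card (join_lists (Inl i)) = t + (s - i)"
    unfolding join_lists_Inl by (simp add: card_image)
qed

lemma card_join_lists_Inr: "card (join_lists (Inr p)) = (if Inr p \<in> A then s + t else t)"
  unfolding join_lists_Inr by (simp add: card_image)

lemma card_join_lists_le: "v \<in> join_verts s t \<Longrightarrow> card (join_lists v) \<le> (if v \<in> A then s + t else t)"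
  by (cases v) (auto simp: card_join_lists_Inl card_join_lists_Inr Inl_mem_A)

lemma sum_card_join_lists: "(\<Sum>v\<in>join_verts s t. card (join_lists v) - 1) = card (join_arcs s t)"
proof -
  have Inl: "(\<Sum>i<s. card (join_lists (Inl i)) - 1) = s * t + (\<Sum>i<s. i)"
  proof -
    have "(\<Sum>i<s. card (join_lists (Inl i)) - 1) = (\<Sum>i<s. t + (s - Suc i))"
      using t_pos by (intro sum.cong) (auto simp: card_join_lists_Inl)
    also have "\<dots> = (\<Sum>i<s. t) + (\<Sum>i<s. s - Suc i)" by (rule sum.distrib)
    also have "(\<Sum>i<s. s - Suc i) = (\<Sum>i<s. i)" by (rule sum.nat_diff_reindex)
    finally show ?thesis by simp
  qed
  have Inr: "(\<Sum>j<t. (card (join_lists (Inr (j, 0))) - 1) + (card (join_lists (Inr (j, 1))) - 1))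
      = t * (s + 2 * (t - 1))"
  proof -
    have "(card (join_lists (Inr (j, 0))) - 1) + (card (join_lists (Inr (j, 1))) - 1) = s + 2 * (t - 1)"
      if "j < t" for j
      using t_pos part_meets_A[OF that] by (cases "Inr (j, 0) \<in> A") (auto simp: card_join_lists_Inr)
    thus ?thesis by simp
  qed
  have gauss: "2 * (\<Sum>i<n. i) = n * (n - 1)" for n :: nat
  proof (induction n)
    case (Suc n) thus ?case by (cases n) (simp_all add: algebra_simps)
  qed simp
  have parts: "t * (s + 2 * (t - 1)) = s * t + 4 * card (ordered_pairs t)"
  proof -
    have "t * (2 * (t - 1)) = 2 * (t * (t - 1))" by simp
    thus ?thesis using gauss[of t] unfolding card_ordered_pairs add_mult_distrib2 by simp
  qed
  show ?thesis
    unfolding sum_join_verts Inl Inr card_join_arcs parts by (simp add: card_ordered_pairs)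
qed

abbreviation join_cn_term :: "(join_vert \<Rightarrow> real) \<Rightarrow> real" where
  "join_cn_term \<equiv> cn_term (join_verts s t) (join_arcs s t) join_lists"

definition off_A :: "nat \<Rightarrow> nat" where
  "off_A j = (if Inr (j, 0) \<in> A then 1 else 0)"

definition on_A :: "nat \<Rightarrow> nat" where
  "on_A j = 1 - off_A j"

lemma off_A_less_2: "off_A j < 2" and on_A_less_2: "on_A j < 2"
  unfolding off_A_def on_A_def by auto

lemma Inr_off_A_notin_A: "j < t \<Longrightarrow> Inr (j, off_A j) \<notin> A"
  using part_meets_A unfolding off_A_def by auto

lemma Inr_on_A_in_A: "j < t \<Longrightarrow> Inr (j, on_A j) \<in> A"
  using part_meets_A unfolding on_A_def off_A_def by auto

lemma less_2_eq_on_A_or_off_A: "k < 2 \<Longrightarrow> k = on_A j \<or> k = off_A j"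
  unfolding on_A_def off_A_def by auto

context
  fixes c :: "join_vert \<Rightarrow> real"
  assumes c_lists: "c \<in> PiE (join_verts s t) join_lists"
    and c_proper: "\<forall>(u, v)\<in>join_arcs s t. c u \<noteq> c v"
begin

lemma color_mem_join_lists: "v \<in> join_verts s t \<Longrightarrow> c v \<in> join_lists v"
  using c_lists by (auto simp: PiE_def)

lemma colors_differ: "(u, v) \<in> join_arcs s t \<Longrightarrow> c u \<noteq> c v"
  using c_proper by auto

lemma bij_betw_off_A_colors: "bij_betw (\<lambda>j. c (Inr (j, off_A j))) {..<t} (real ` {..<t})"
proof -
  have inj: "inj_on (\<lambda>j. c (Inr (j, off_A j))) {..<t}"
  proof (rule inj_onI, rule ccontr)
    fix j j' assume "j \<in> {..<t}" "j' \<in> {..<t}" "j \<noteq> j'"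
    hence "(Inr (j, off_A j), Inr (j', off_A j')) \<in> join_arcs s t \<or> (Inr (j', off_A j'), Inr (j, off_A j)) \<in> join_arcs s t"
      by (auto simp: mem_join_arcs_iff off_A_less_2)
    moreover assume "c (Inr (j, off_A j)) = c (Inr (j', off_A j'))"
    ultimately show False using colors_differ by metis
  qed
  have "(\<lambda>j. c (Inr (j, off_A j))) ` {..<t} \<subseteq> real ` {..<t}"
  proof clarify
    fix j assume j: "j < t"
    hence "c (Inr (j, off_A j)) \<in> join_lists (Inr (j, off_A j))"
      using color_mem_join_lists off_A_less_2 by simp
    thus "c (Inr (j, off_A j)) \<in> real ` {..<t}" using Inr_off_A_notin_A[OF j] by (simp add: join_lists_Inr)
  qed
  hence "(\<lambda>j. c (Inr (j, off_A j))) ` {..<t} = real ` {..<t}"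
    by (intro card_subset_eq) (auto simp: card_image[OF inj] card_image)
  thus ?thesis using inj unfolding bij_betw_def by blast
qed

text \<open>The colors below \<open>t\<close> are all taken by \<open>K_{2*t}\<close>, so \<open>Inl i\<close> gets a color
  \<open>t + h i\<close> with \<open>i \<le> h i < s\<close> and \<open>h\<close> injective; hence \<open>h\<close> is the identity.\<close>
lemma Inl_color: "i < s \<Longrightarrow> c (Inl i) = real (t + i)"
proof -
  have above: "\<exists>m. c (Inl i) = real (t + m) \<and> i \<le> m \<and> m < s" if i: "i \<in> {..<s}" for i
  proof -
    obtain n where n: "n \<in> {..<t} \<union> {t + i..<s + t}" "c (Inl i) = real n"
      using color_mem_join_lists[of "Inl i"] i by (auto simp: join_lists_Inl)
    have "n \<notin> {..<t}"
    proof
      assume "n \<in> {..<t}"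
      hence "real n \<in> (\<lambda>j. c (Inr (j, off_A j))) ` {..<t}"
        using bij_betw_imp_surj_on[OF bij_betw_off_A_colors] by auto
      then obtain j where j: "j < t" "c (Inl i) = c (Inr (j, off_A j))" using n(2) by auto
      have "(Inl i, Inr (j, off_A j)) \<in> join_arcs s t"
        using i j off_A_less_2 by (simp add: mem_join_arcs_iff)
      thus False using colors_differ j(2) by blast
    qed
    hence "c (Inl i) = real (t + (n - t)) \<and> i \<le> n - t \<and> n - t < s" using n by auto
    thus ?thesis by blast
  qed
  have "\<forall>i\<in>{..<s}. \<exists>m. c (Inl i) = real (t + m) \<and> i \<le> m \<and> m < s"
    using above by blast
  then obtain h where h: "\<forall>i\<in>{..<s}. c (Inl i) = real (t + h i) \<and> i \<le> h i \<and> h i < s"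
    by (rule bchoice[THEN exE])
  have "inj_on h {..<s}"
  proof (rule inj_onI, rule ccontr)
    fix i i' assume ii': "i \<in> {..<s}" "i' \<in> {..<s}" "h i = h i'" "i \<noteq> i'"
    hence "c (Inl i) = c (Inl i')" using h by simp
    moreover have "(Inl i, Inl i') \<in> join_arcs s t \<or> (Inl i', Inl i) \<in> join_arcs s t"
      using ii' by (auto simp: mem_join_arcs_iff)
    ultimately show False using colors_differ by metis
  qed
  moreover have "\<forall>i<s. i \<le> h i \<and> h i < s" using h by simp
  ultimately have "\<forall>i<s. h i = i" by (rule inj_on_ge_imp_eq)
  thus "i < s \<Longrightarrow> c (Inl i) = real (t + i)" using h by simp
qed

lemma on_A_color: "j < t \<Longrightarrow> c (Inr (j, on_A j)) = c (Inr (j, off_A j))"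
proof -
  assume j: "j < t"
  obtain n where n: "n < s + t" "c (Inr (j, on_A j)) = real n"
    using color_mem_join_lists[of "Inr (j, on_A j)"] j Inr_on_A_in_A on_A_less_2
    by (auto simp: join_lists_Inr)
  have "n < t"
  proof (rule ccontr)
    assume "\<not> n < t"
    hence "c (Inl (n - t)) = c (Inr (j, on_A j))" "n - t < s" using n Inl_color[of "n - t"] by auto
    moreover have "(Inl (n - t), Inr (j, on_A j)) \<in> join_arcs s t \<longleftrightarrow> n - t < s"
      using j on_A_less_2 by (simp add: mem_join_arcs_iff)
    ultimately show False using colors_differ by blast
  qed
  hence "real n \<in> (\<lambda>j. c (Inr (j, off_A j))) ` {..<t}"
    using bij_betw_imp_surj_on[OF bij_betw_off_A_colors] by auto
  then obtain j' where j': "j' < t" "c (Inr (j, on_A j)) = c (Inr (j', off_A j'))" using n(2) by auto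
  have "j' = j"
  proof (rule ccontr)
    assume "j' \<noteq> j"
    hence "(Inr (j, on_A j), Inr (j', off_A j')) \<in> join_arcs s t \<or> (Inr (j', off_A j'), Inr (j, on_A j)) \<in> join_arcs s t"
      using j j' by (auto simp: mem_join_arcs_iff off_A_less_2 on_A_less_2)
    thus False using j'(2) colors_differ by metis
  qed
  thus ?thesis using j' by simp
qed

lemma proper_coloring_eq_join_coloring:
  "\<exists>\<beta>. bij_betw \<beta> {..<t} (real ` {..<t}) \<and> (\<forall>v\<in>join_verts s t. c v = join_coloring t \<beta> v)"
proof (intro exI conjI ballI)
  show "bij_betw (\<lambda>j. c (Inr (j, off_A j))) {..<t} (real ` {..<t})" by (rule bij_betw_off_A_colors)
  fix v assume "v \<in> join_verts s t"
  show "c v = join_coloring t (\<lambda>j. c (Inr (j, off_A j))) v"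
  proof (cases v)
    case (Inr p)
    then obtain j k where "p = (j, k)" "j < t" "k < 2" using \<open>v \<in> join_verts s t\<close> by (cases p) auto
    thus ?thesis using Inr on_A_color less_2_eq_on_A_or_off_A[of k j] by auto
  qed (use Inl_color \<open>v \<in> join_verts s t\<close> in auto)
qed

end

lemma prod_weights_join_coloring:
  assumes bij: "bij_betw \<beta> {..<t} Y"
  shows "(\<Prod>v\<in>join_verts s t. 1 / node_weight (join_lists v) (join_coloring t \<beta> v))
    = (\<Prod>i<s. 1 / node_weight (join_lists (Inl i)) (real (t + i)))
      * (\<Prod>y\<in>Y. 1 / node_weight (real ` {..<s + t}) y * (1 / node_weight (real ` {..<t}) y))"
proof -
  have "(\<Prod>j<t. 1 / node_weight (join_lists (Inr (j, 0))) (\<beta> j) * (1 / node_weight (join_lists (Inr (j, 1))) (\<beta> j)))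
      = (\<Prod>j<t. 1 / node_weight (real ` {..<s + t}) (\<beta> j) * (1 / node_weight (real ` {..<t}) (\<beta> j)))"
  proof (intro prod.cong refl)
    fix j assume "j \<in> {..<t}"
    thus "1 / node_weight (join_lists (Inr (j, 0))) (\<beta> j) * (1 / node_weight (join_lists (Inr (j, 1))) (\<beta> j))
        = 1 / node_weight (real ` {..<s + t}) (\<beta> j) * (1 / node_weight (real ` {..<t}) (\<beta> j))"
      using part_meets_A[of j] by (cases "Inr (j, 0) \<in> A") (simp_all add: join_lists_Inr)
  qed
  also have "\<dots> = (\<Prod>y\<in>Y. 1 / node_weight (real ` {..<s + t}) y * (1 / node_weight (real ` {..<t}) y))"
    by (rule prod.reindex_bij_betw[OF bij])
  finally show ?thesis unfolding prod_join_verts by simp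
qed

text \<open>All proper colorings from the lists give the same Nullstellensatz term: the vertices
  of \<open>K_s\<close> are colored canonically, and the factors involving the colors of \<open>K_{2*t}\<close>
  depend only on the set of colors below \<open>t\<close>, since every pair of parts contributes four
  arcs (an even power of each color difference).\<close>
lemma cn_term_join_coloring:
  assumes "bij_betw \<beta> {..<t} (real ` {..<t})" "bij_betw \<beta>' {..<t} (real ` {..<t})"
  shows "join_cn_term (join_coloring t \<beta>) = join_cn_term (join_coloring t \<beta>')"
  unfolding cn_term_def prod_join_arcs
  by (simp only: prod_clique_arcs_join_coloring prod_cross_arcs_join_coloring[OF assms(1)]
      prod_cross_arcs_join_coloring[OF assms(2)] prod_part_arcs_join_coloring[OF assms(1)]
      prod_part_arcs_join_coloring[OF assms(2)] prod_weights_join_coloring[OF assms(1)]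
      prod_weights_join_coloring[OF assms(2)])

lemma join_coloring_real_proper: "\<forall>(u, v)\<in>join_arcs s t. join_coloring t real u \<noteq> join_coloring t real v"
  unfolding join_arcs_def clique_arcs_def cross_arcs_def part_arcs_def ordered_pairs_def by auto

lemma join_coloring_real_mem_lists: "v \<in> join_verts s t \<Longrightarrow> join_coloring t real v \<in> join_lists v"
proof (cases v)
  case (Inl i)
  assume "v \<in> join_verts s t"
  hence "t + i \<in> {..<t} \<union> {t + i..<s + t}" using Inl by simp
  thus ?thesis unfolding Inl join_lists_Inl join_coloring_simps by (rule imageI)
qed (auto simp: join_lists_Inr)

lemma finite_join_arcs: "finite (join_arcs s t)"
  using finite_join_verts join_arcs_subset by (meson finite_SigmaI finite_subset)

lemma join_cn_term_real_nonzero: "join_cn_term (join_coloring t real) \<noteq> 0"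
proof
  assume "join_cn_term (join_coloring t real) = 0"
  then obtain u v where "(u, v) \<in> join_arcs s t" "join_coloring t real u = join_coloring t real v"
    unfolding cn_term_eq_0_iff[OF finite_join_verts finite_join_arcs] by blast
  thus False using join_coloring_real_proper by blast
qed

lemma sum_cn_term_nonzero: "(\<Sum>c\<in>PiE (join_verts s t) join_lists. join_cn_term c) \<noteq> 0"
proof -
  let ?C = "PiE (join_verts s t) join_lists"
  let ?proper = "\<lambda>c. \<forall>(u, v)\<in>join_arcs s t. c u \<noteq> c v"
  let ?K = "join_cn_term (join_coloring t real)"
  have fin_C: "finite ?C" using finite_join_verts finite_join_lists by (simp add: finite_PiE)
  have bij_real: "bij_betw real {..<t} (real ` {..<t})" by (simp add: bij_betw_def inj_on_def)
  have "(\<Sum>c\<in>?C. join_cn_term c) = (\<Sum>c\<in>?C. if ?proper c then ?K else 0)"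
  proof (intro sum.cong refl)
    fix c assume c: "c \<in> ?C"
    show "join_cn_term c = (if ?proper c then ?K else 0)"
    proof (cases "?proper c")
      case True
      then obtain \<beta> where \<beta>: "bij_betw \<beta> {..<t} (real ` {..<t})" "\<forall>v\<in>join_verts s t. c v = join_coloring t \<beta> v"
        using proper_coloring_eq_join_coloring c by blast
      have "join_cn_term c = join_cn_term (join_coloring t \<beta>)"
        by (rule cn_term_cong[OF join_arcs_subset \<beta>(2)])
      thus ?thesis using True cn_term_join_coloring[OF \<beta>(1) bij_real] by simp
    qed (use c in \<open>auto simp: cn_term_eq_0_iff[OF finite_join_verts finite_join_arcs]\<close>)
  qed
  also have "\<dots> = (\<Sum>c\<in>{c \<in> ?C. ?proper c}. ?K)"
    by (rule sum.inter_filter[OF fin_C, symmetric])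
  also have "\<dots> = real (card {c \<in> ?C. ?proper c}) * ?K" by simp
  finally have sum_eq: "(\<Sum>c\<in>?C. join_cn_term c) = real (card {c \<in> ?C. ?proper c}) * ?K" .
  have "restrict (join_coloring t real) (join_verts s t) \<in> {c \<in> ?C. ?proper c}"
    using join_coloring_real_mem_lists join_coloring_real_proper join_arcs_subset
    by (fastforce simp: restrict_PiE_iff)
  hence "{c \<in> ?C. ?proper c} \<noteq> {}" by blast
  hence "card {c \<in> ?C. ?proper c} \<noteq> 0" using fin_C by simp
  thus ?thesis unfolding sum_eq using join_cn_term_real_nonzero by simp
qed

end

theorem mainTheorem4:
  fixes s t :: nat and A :: "(nat + nat \<times> nat) set" and f :: "nat + nat \<times> nat \<Rightarrow> nat"
  assumes "t \<ge> 1"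
    and "A \<subseteq> join_verts s t" and "card A = s + t" and "is_clique (join_edges s t) A"
    and "\<forall>v\<in>join_verts s t. f v \<ge> 1"
    and "\<forall>v\<in>A. f v \<ge> s + t"
    and "\<forall>v\<in>join_verts s t - A. f v \<ge> t"
  shows "f_AT (join_verts s t) (join_edges s t) f"
proof -
  interpret join_max_clique s t A using assms(1-4) by unfold_locales
  interpret oriented_graph "join_verts s t" "join_edges s t" "join_arcs s t" by (rule oriented_graph_join)
  show ?thesis
  proof (rule f_AT_if_sum_cn_term_nonzero)
    show "\<forall>v\<in>join_verts s t. finite (join_lists v) \<and> join_lists v \<noteq> {}"
      using finite_join_lists join_lists_nonempty by blast
    show "\<forall>v\<in>join_verts s t. card (join_lists v) \<le> f v"
    proof
      fix v assume "v \<in> join_verts s t"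
      thus "card (join_lists v) \<le> f v"
        using card_join_lists_le[of v] assms(6,7) by (cases "v \<in> A") force+
    qed
  qed (rule sum_card_join_lists, rule sum_cn_term_nonzero)
qed

end
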